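(* Let $K\subseteq\mathbb{R}^n$ be non-empty and compact. Then every $K$-positivity preserver $T=\sum_{\alpha\in\mathbb{N}_0^n}q_\alpha\partial^\alpha$ with constant coefficients $q_\alpha\in\mathbb{R}$ is of the form $T=c\cdot\mathbb{1}$ for some $c\in[0,\infty)$.
   Context: A linear map $T:\mathbb{R}[x_1,\dots,x_n]\to\mathbb{R}[x_1,\dots,x_n]$ is a $K$-positivity preserver if it maps every polynomial non-negative on $K$ to a polynomial non-negative on $K$. $\mathbb{1}$ denotes the identity map. *)

theory Defs
  imports "HOL-Analysis.Analysis" "HOL-Library.Poly_Mapping"
begin

text \<open>Real polynomials in the variables x_i, i in the finite index type 'n (so n = CARD('n)).
  A monomial exponent alpha in N_0^n is a finitely supported map 'n to nat; a polynomial is a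
  finitely supported map from exponents to real coefficients.\<close>

type_synonym 'n mpoly = "('n \<Rightarrow>\<^sub>0 nat) \<Rightarrow>\<^sub>0 real"

definition mono_eval :: "('n::finite \<Rightarrow>\<^sub>0 nat) \<Rightarrow> real^'n \<Rightarrow> real" where
  "mono_eval \<alpha> x = (\<Prod>i\<in>UNIV. (x $ i) ^ Poly_Mapping.lookup \<alpha> i)"

definition peval :: "'n::finite mpoly \<Rightarrow> real^'n \<Rightarrow> real" where
  "peval p x = (\<Sum>\<alpha>\<in>Poly_Mapping.keys p. Poly_Mapping.lookup p \<alpha> * mono_eval \<alpha> x)"

definition mle :: "('n \<Rightarrow>\<^sub>0 nat) \<Rightarrow> ('n \<Rightarrow>\<^sub>0 nat) \<Rightarrow> bool" where
  "mle \<alpha> \<beta> \<longleftrightarrow> (\<forall>i. Poly_Mapping.lookup \<alpha> i \<le> Poly_Mapping.lookup \<beta> i)"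

definition pscale :: "real \<Rightarrow> 'n mpoly \<Rightarrow> 'n mpoly" where
  "pscale c p = Poly_Mapping.map (\<lambda>a. c * a) p"

text \<open>partial^alpha x^beta = prod_i beta_i!/(beta_i-alpha_i)! x^(beta-alpha) if alpha <= beta, else 0.\<close>
definition pderivm :: "('n::finite \<Rightarrow>\<^sub>0 nat) \<Rightarrow> 'n mpoly \<Rightarrow> 'n mpoly" where
  "pderivm \<alpha> p = (\<Sum>\<beta>\<in>Poly_Mapping.keys p. if mle \<alpha> \<beta> then
      Poly_Mapping.single (\<beta> - \<alpha>)
        (Poly_Mapping.lookup p \<beta> * (\<Prod>i\<in>UNIV. real (fact (Poly_Mapping.lookup \<beta> i)) / real (fact (Poly_Mapping.lookup \<beta> i - Poly_Mapping.lookup \<alpha> i))))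
      else 0)"

text \<open>The constant-coefficient differential operator T = sum_alpha q_alpha partial^alpha,
  applied to p (only the finitely many alpha below some exponent of p contribute).\<close>
definition diffop :: "(('n::finite \<Rightarrow>\<^sub>0 nat) \<Rightarrow> real) \<Rightarrow> 'n mpoly \<Rightarrow> 'n mpoly" where
  "diffop q p = (\<Sum>\<alpha>\<in>{\<alpha>. \<exists>\<beta>\<in>Poly_Mapping.keys p. mle \<alpha> \<beta>}. pscale (q \<alpha>) (pderivm \<alpha> p))"

definition pos_preserver :: "(real^'n) set \<Rightarrow> ('n::finite mpoly \<Rightarrow> 'n mpoly) \<Rightarrow> bool" where
  "pos_preserver K T \<longleftrightarrow>
     (\<forall>p. (\<forall>x\<in>K. peval p x \<ge> 0) \<longrightarrow> (\<forall>x\<in>K. peval (T p) x \<ge> 0))"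

end

theory Submission
  imports Defs "HOL-Computational_Algebra.Polynomial"
begin

text \<open>Write \<open>T = \<Sum>\<^sub>\<alpha> q\<^sub>\<alpha> \<partial>\<^sup>\<alpha>\<close>; we show \<open>q\<^sub>\<gamma> = 0\<close> for \<open>\<gamma> \<noteq> 0\<close> by induction on \<open>|\<gamma>|\<close>.
  If \<open>q\<close> vanishes strictly between \<open>0\<close> and \<open>\<gamma>\<close>, then for a product \<open>p(x) = \<Prod>\<^sub>j g\<^sub>j(x\<^sub>j)\<close>
  with \<open>deg g\<^sub>j \<le> \<gamma>\<^sub>j\<close> we get \<open>Tp = q\<^sub>0 p + q\<^sub>\<gamma> \<Prod>\<^sub>j \<gamma>\<^sub>j! c\<^sub>j\<close>, where \<open>c\<^sub>j\<close> is the coefficient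
  of degree \<open>\<gamma>\<^sub>j\<close> of \<open>g\<^sub>j\<close>. Evaluating at a zero of \<open>p\<close> in \<open>K\<close>, positivity of \<open>p\<close> on \<open>K\<close>
  forces \<open>q\<^sub>\<gamma> \<Prod>\<^sub>j c\<^sub>j \<ge> 0\<close>. Let \<open>m\<^sub>j\<close>, \<open>M\<^sub>j\<close> be the minimum and maximum of \<open>x\<^sub>j\<close> on the
  compact set \<open>K\<close> and pick \<open>\<gamma>\<^sub>i > 0\<close>. Taking \<open>g\<^sub>j = (x\<^sub>j - m\<^sub>j)^\<gamma>\<^sub>j\<close> gives \<open>q\<^sub>\<gamma> \<ge> 0\<close>;
  replacing \<open>g\<^sub>i\<close> by \<open>(x\<^sub>i - m\<^sub>i)^(\<gamma>\<^sub>i - 1) (M\<^sub>i - x\<^sub>i)\<close> makes \<open>c\<^sub>i = -1\<close> and gives \<open>q\<^sub>\<gamma> \<le> 0\<close>.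
  Thus \<open>T = q\<^sub>0 \<one>\<close>, and \<open>q\<^sub>0 \<ge> 0\<close> by testing \<open>T\<close> on the constant \<open>1\<close>.\<close>

lemma lookup_pscale [simp]: "Poly_Mapping.lookup (pscale c p) \<alpha> = c * Poly_Mapping.lookup p \<alpha>"
  unfolding pscale_def by (simp add: Poly_Mapping.map.rep_eq when_def)

lemma pscale_0 [simp]: "pscale 0 p = 0"
  by (rule poly_mapping_eqI) simp

lemma peval_eq_sum_superset:
  assumes "finite S" "Poly_Mapping.keys p \<subseteq> S"
  shows "peval p x = (\<Sum>\<alpha>\<in>S. Poly_Mapping.lookup p \<alpha> * mono_eval \<alpha> x)"
  unfolding peval_def
  by (rule sum.mono_neutral_left) (use assms in \<open>auto simp: in_keys_iff\<close>)

lemma peval_add: "peval (p + r) x = peval p x + peval r x"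
proof -
  let ?S = "Poly_Mapping.keys p \<union> Poly_Mapping.keys r"
  have "peval (p + r) x = (\<Sum>\<alpha>\<in>?S. Poly_Mapping.lookup (p + r) \<alpha> * mono_eval \<alpha> x)"
    using keys_add[of p r] by (intro peval_eq_sum_superset) auto
  also have "\<dots> = (\<Sum>\<alpha>\<in>?S. Poly_Mapping.lookup p \<alpha> * mono_eval \<alpha> x)
      + (\<Sum>\<alpha>\<in>?S. Poly_Mapping.lookup r \<alpha> * mono_eval \<alpha> x)"
    by (simp add: lookup_add distrib_right sum.distrib)
  also have "\<dots> = peval p x + peval r x"
    by (simp add: peval_eq_sum_superset[symmetric])
  finally show ?thesis .
qed

lemma peval_0 [simp]: "peval 0 x = 0"
  by (simp add: peval_def)

lemma peval_sum: "peval (\<Sum>a\<in>A. f a) x = (\<Sum>a\<in>A. peval (f a) x)"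
  by (induction A rule: infinite_finite_induct) (auto simp: peval_add)

lemma peval_pscale: "peval (pscale c p) x = c * peval p x"
proof -
  have "peval (pscale c p) x = (\<Sum>\<alpha>\<in>Poly_Mapping.keys p. c * Poly_Mapping.lookup p \<alpha> * mono_eval \<alpha> x)"
    by (subst peval_eq_sum_superset[of "Poly_Mapping.keys p"]) (auto simp: in_keys_iff)
  then show ?thesis
    by (simp add: peval_def sum_distrib_left mult.assoc)
qed

lemma peval_single: "peval (Poly_Mapping.single \<alpha> c) x = c * mono_eval \<alpha> x"
  by (subst peval_eq_sum_superset[of "{\<alpha>}"]) auto

lemma fact_add_div_fact_eq_pochhammer:
  "fact (n + m) / fact n = (pochhammer (of_nat (Suc n)) m :: 'a::field_char_0)"
proof -
  have "fact (n + m) = (fact n * pochhammer (of_nat (Suc n)) m :: 'a)"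
    unfolding pochhammer_fact pochhammer_product'[of 1 n m] by (simp add: add.commute)
  then show ?thesis by simp
qed

lemma lookup_pderivm:
  fixes p :: "'n::finite mpoly"
  shows "Poly_Mapping.lookup (pderivm \<alpha> p) \<delta> = Poly_Mapping.lookup p (\<delta> + \<alpha>) *
    (\<Prod>i\<in>UNIV. pochhammer (of_nat (Suc (Poly_Mapping.lookup \<delta> i))) (Poly_Mapping.lookup \<alpha> i))"
proof -
  define c where "c \<beta> = Poly_Mapping.lookup p \<beta> * (\<Prod>i\<in>UNIV. real (fact (Poly_Mapping.lookup \<beta> i)) /
      real (fact (Poly_Mapping.lookup \<beta> i - Poly_Mapping.lookup \<alpha> i)))" for \<beta>
  have shift: "mle \<alpha> \<beta> \<and> \<beta> - \<alpha> = \<delta> \<longleftrightarrow> \<beta> = \<delta> + \<alpha>" for \<beta>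
    by (auto simp: mle_def poly_mapping_eq_iff fun_eq_iff lookup_add lookup_minus)
      (metis le_add_diff_inverse2)
  have "Poly_Mapping.lookup (pderivm \<alpha> p) \<delta> = (\<Sum>\<beta>\<in>Poly_Mapping.keys p. if \<beta> = \<delta> + \<alpha> then c \<beta> else 0)"
    unfolding pderivm_def lookup_sum c_def
    by (intro sum.cong refl) (auto simp: lookup_single when_def simp flip: shift)
  also have "\<dots> = c (\<delta> + \<alpha>)"
    by (simp add: c_def in_keys_iff)
  finally show ?thesis
    by (simp add: c_def lookup_add fact_add_div_fact_eq_pochhammer)
qed

lemma pderivm_0: "pderivm 0 p = p"
  by (rule poly_mapping_eqI) (simp add: lookup_pderivm)

definition exps_below :: "('n \<Rightarrow>\<^sub>0 nat) \<Rightarrow> ('n \<Rightarrow>\<^sub>0 nat) set" where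
  "exps_below \<gamma> = {\<beta>. mle \<beta> \<gamma>}"

lemma exps_below_eq_image_PiE:
  fixes \<gamma> :: "'n::finite \<Rightarrow>\<^sub>0 nat"
  shows "exps_below \<gamma> = Abs_poly_mapping ` (PiE UNIV (\<lambda>j. {..Poly_Mapping.lookup \<gamma> j}))"
proof
  show "exps_below \<gamma> \<subseteq> Abs_poly_mapping ` (PiE UNIV (\<lambda>j. {..Poly_Mapping.lookup \<gamma> j}))"
    by (auto simp: exps_below_def mle_def image_iff intro!: bexI[of _ "Poly_Mapping.lookup _"])
  show "Abs_poly_mapping ` (PiE UNIV (\<lambda>j. {..Poly_Mapping.lookup \<gamma> j})) \<subseteq> exps_below \<gamma>"
    by (auto simp: exps_below_def mle_def)
qed

lemma finite_exps_below: "finite (exps_below (\<gamma>::'n::finite \<Rightarrow>\<^sub>0 nat))"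
  unfolding exps_below_eq_image_PiE by (intro finite_imageI finite_PiE) auto

lemma sum_exps_below_prod:
  fixes h :: "'n::finite \<Rightarrow> nat \<Rightarrow> 'a::comm_semiring_1"
  shows "(\<Sum>\<beta>\<in>exps_below \<gamma>. \<Prod>j\<in>UNIV. h j (Poly_Mapping.lookup \<beta> j))
    = (\<Prod>j\<in>UNIV. \<Sum>k\<le>Poly_Mapping.lookup \<gamma> j. h j k)"
proof -
  have inj: "inj_on (Abs_poly_mapping :: ('n \<Rightarrow> nat) \<Rightarrow> _) A" for A
    by (rule inj_onI) (metis finite lookup_Abs_poly_mapping)
  have "(\<Sum>\<beta>\<in>exps_below \<gamma>. \<Prod>j\<in>UNIV. h j (Poly_Mapping.lookup \<beta> j))
      = (\<Sum>f\<in>PiE UNIV (\<lambda>j. {..Poly_Mapping.lookup \<gamma> j}). \<Prod>j\<in>UNIV. h j (f j))"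
    unfolding exps_below_eq_image_PiE by (simp add: sum.reindex[OF inj])
  also have "\<dots> = (\<Prod>j\<in>UNIV. \<Sum>k\<le>Poly_Mapping.lookup \<gamma> j. h j k)"
    by (rule prod_sum_PiE[symmetric]) auto
  finally show ?thesis .
qed

lemma sum_lookup_strict_mono:
  fixes \<beta> \<gamma> :: "'n::finite \<Rightarrow>\<^sub>0 nat"
  assumes "mle \<beta> \<gamma>" "\<beta> \<noteq> \<gamma>"
  shows "(\<Sum>j\<in>UNIV. Poly_Mapping.lookup \<beta> j) < (\<Sum>j\<in>UNIV. Poly_Mapping.lookup \<gamma> j)"
proof (rule sum_strict_mono_ex1)
  show "\<forall>j\<in>UNIV. Poly_Mapping.lookup \<beta> j \<le> Poly_Mapping.lookup \<gamma> j"
    using assms(1) by (simp add: mle_def)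
  then show "\<exists>j\<in>UNIV. Poly_Mapping.lookup \<beta> j < Poly_Mapping.lookup \<gamma> j"
    using assms(2) by (metis UNIV_I le_neq_implies_less poly_mapping_eqI)
qed simp

text \<open>The polynomial \<open>\<Prod>\<^sub>j g\<^sub>j(x\<^sub>j)\<close>, with all exponents truncated to lie below \<open>\<gamma>\<close>.\<close>
definition prod_poly :: "('n::finite \<Rightarrow>\<^sub>0 nat) \<Rightarrow> ('n \<Rightarrow> real poly) \<Rightarrow> 'n mpoly" where
  "prod_poly \<gamma> g = (\<Sum>\<beta>\<in>exps_below \<gamma>.
     Poly_Mapping.single \<beta> (\<Prod>j\<in>UNIV. coeff (g j) (Poly_Mapping.lookup \<beta> j)))"

lemma lookup_prod_poly:
  "Poly_Mapping.lookup (prod_poly \<gamma> g) \<beta> =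
    (if mle \<beta> \<gamma> then \<Prod>j\<in>UNIV. coeff (g j) (Poly_Mapping.lookup \<beta> j) else 0)"
  unfolding prod_poly_def lookup_sum
  by (simp add: lookup_single when_def sum.delta[OF finite_exps_below]) (simp add: exps_below_def)

lemma keys_prod_poly: "Poly_Mapping.keys (prod_poly \<gamma> g) \<subseteq> exps_below \<gamma>"
  by (auto simp: in_keys_iff lookup_prod_poly exps_below_def split: if_splits)

lemma peval_prod_poly:
  assumes "\<forall>j. degree (g j) \<le> Poly_Mapping.lookup \<gamma> j"
  shows "peval (prod_poly \<gamma> g) x = (\<Prod>j\<in>UNIV. poly (g j) (x $ j))"
proof -
  have "peval (prod_poly \<gamma> g) x =
      (\<Sum>\<beta>\<in>exps_below \<gamma>. \<Prod>j\<in>UNIV. coeff (g j) (Poly_Mapping.lookup \<beta> j) * (x $ j) ^ Poly_Mapping.lookup \<beta> j)"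
    by (simp add: peval_eq_sum_superset[OF finite_exps_below keys_prod_poly] lookup_prod_poly
        mono_eval_def prod.distrib exps_below_def)
  also have "\<dots> = (\<Prod>j\<in>UNIV. \<Sum>k\<le>Poly_Mapping.lookup \<gamma> j. coeff (g j) k * (x $ j) ^ k)"
    by (rule sum_exps_below_prod)
  also have "\<dots> = (\<Prod>j\<in>UNIV. poly (g j) (x $ j))"
    unfolding poly_altdef using assms
    by (intro prod.cong refl sum.mono_neutral_right) (auto simp: coeff_eq_0)
  finally show ?thesis .
qed

lemma pderivm_prod_poly:
  assumes "mle \<alpha> \<gamma>"
  shows "pderivm \<alpha> (prod_poly \<gamma> g) = prod_poly (\<gamma> - \<alpha>) (\<lambda>j. (pderiv ^^ Poly_Mapping.lookup \<alpha> j) (g j))"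
proof (rule poly_mapping_eqI)
  fix \<delta>
  have below: "mle (\<delta> + \<alpha>) \<gamma> \<longleftrightarrow> mle \<delta> (\<gamma> - \<alpha>)"
    using assms by (auto simp: mle_def lookup_add lookup_minus le_diff_conv2)
  show "Poly_Mapping.lookup (pderivm \<alpha> (prod_poly \<gamma> g)) \<delta> =
      Poly_Mapping.lookup (prod_poly (\<gamma> - \<alpha>) (\<lambda>j. (pderiv ^^ Poly_Mapping.lookup \<alpha> j) (g j))) \<delta>"
    unfolding lookup_pderivm lookup_prod_poly below
    by (simp add: coeff_higher_pderiv lookup_add mult.commute
        flip: prod.distrib)
qed

lemma peval_pderivm_prod_poly:
  assumes "\<forall>j. degree (g j) \<le> Poly_Mapping.lookup \<gamma> j" "mle \<alpha> \<gamma>"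
  shows "peval (pderivm \<alpha> (prod_poly \<gamma> g)) x =
    (\<Prod>j\<in>UNIV. poly ((pderiv ^^ Poly_Mapping.lookup \<alpha> j) (g j)) (x $ j))"
  unfolding pderivm_prod_poly[OF assms(2)]
  by (rule peval_prod_poly) (use assms in \<open>auto simp: degree_higher_pderiv lookup_minus intro: diff_le_mono\<close>)

lemma pscale_0_right [simp]: "pscale c 0 = 0"
  by (rule poly_mapping_eqI) simp

lemma diffop_eq_sum_exps_below:
  assumes "Poly_Mapping.keys p \<subseteq> exps_below \<gamma>"
  shows "diffop q p = (\<Sum>\<alpha>\<in>exps_below \<gamma>. pscale (q \<alpha>) (pderivm \<alpha> p))"
  unfolding diffop_def
proof (rule sum.mono_neutral_left[OF finite_exps_below])
  show "{\<alpha>. \<exists>\<beta>\<in>Poly_Mapping.keys p. mle \<alpha> \<beta>} \<subseteq> exps_below \<gamma>"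
    using assms by (auto simp: exps_below_def mle_def intro: order_trans)
  show "\<forall>\<alpha>\<in>exps_below \<gamma> - {\<alpha>. \<exists>\<beta>\<in>Poly_Mapping.keys p. mle \<alpha> \<beta>}. pscale (q \<alpha>) (pderivm \<alpha> p) = 0"
    by (auto simp: pderivm_def intro!: sum.neutral)
qed

lemma higher_pderiv_degree_le:
  fixes p :: "'a::{idom,semiring_char_0} poly"
  assumes "degree p \<le> n"
  shows "(pderiv ^^ n) p = [:fact n * coeff p n:]"
proof -
  have "degree ((pderiv ^^ n) p) = 0"
    using assms by (simp add: degree_higher_pderiv)
  then have "(pderiv ^^ n) p = [:coeff ((pderiv ^^ n) p) 0:]"
    by (metis degree0_coeffs coeff_pCons_0)
  then show ?thesis
    by (simp add: coeff_higher_pderiv pochhammer_fact)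
qed

lemma pos_preserver_diffop_coeff_mult_nonneg:
  fixes K :: "(real^'n::finite) set"
  assumes pres: "pos_preserver K (diffop q)"
    and vanish: "\<forall>\<beta>\<in>exps_below \<gamma> - {0, \<gamma>}. q \<beta> = 0" and "\<gamma> \<noteq> 0"
    and deg: "\<forall>j. degree (g j) \<le> Poly_Mapping.lookup \<gamma> j"
    and nonneg: "\<forall>x\<in>K. 0 \<le> (\<Prod>j\<in>UNIV. poly (g j) (x $ j))"
    and "x0 \<in> K" and root: "(\<Prod>j\<in>UNIV. poly (g j) (x0 $ j)) = 0"
  shows "0 \<le> q \<gamma> * (\<Prod>j\<in>UNIV. coeff (g j) (Poly_Mapping.lookup \<gamma> j))"
proof -
  let ?p = "prod_poly \<gamma> g"
  define D where "D \<alpha> = (\<Prod>j\<in>UNIV. poly ((pderiv ^^ Poly_Mapping.lookup \<alpha> j) (g j)) (x0 $ j))" for \<alpha>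
  have "\<forall>x\<in>K. 0 \<le> peval ?p x"
    using nonneg by (simp add: peval_prod_poly[OF deg])
  then have "0 \<le> peval (diffop q ?p) x0"
    using pres \<open>x0 \<in> K\<close> by (auto simp: pos_preserver_def)
  also have "peval (diffop q ?p) x0 = (\<Sum>\<alpha>\<in>exps_below \<gamma>. q \<alpha> * D \<alpha>)"
    unfolding diffop_eq_sum_exps_below[OF keys_prod_poly] peval_sum peval_pscale D_def
    by (intro sum.cong refl) (simp add: peval_pderivm_prod_poly[OF deg] exps_below_def)
  also have "\<dots> = q 0 * D 0 + q \<gamma> * D \<gamma>"
    using vanish \<open>\<gamma> \<noteq> 0\<close>
    by (subst sum.mono_neutral_right[OF finite_exps_below, of "{0, \<gamma>}"])
      (auto simp: exps_below_def mle_def)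
  also have "D 0 = 0"
    using root by (simp add: D_def)
  also have "D \<gamma> = (\<Prod>j\<in>UNIV. fact (Poly_Mapping.lookup \<gamma> j)) * (\<Prod>j\<in>UNIV. coeff (g j) (Poly_Mapping.lookup \<gamma> j))"
    using deg by (simp add: D_def higher_pderiv_degree_le prod.distrib)
  finally have "0 \<le> (\<Prod>j\<in>UNIV. fact (Poly_Mapping.lookup \<gamma> j)) * (q \<gamma> * (\<Prod>j\<in>UNIV. coeff (g j) (Poly_Mapping.lookup \<gamma> j)))"
    by (simp add: mult_ac)
  moreover have "0 < (\<Prod>j\<in>UNIV. fact (Poly_Mapping.lookup \<gamma> j) :: real)"
    by (simp add: prod_pos)
  ultimately show ?thesis
    by (simp add: zero_le_mult_iff)
qed

lemma degree_coeff_linear_power_mult_reflected: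
  fixes a b :: "'a::idom"
  assumes "0 < k"
  shows "degree ([:- a, 1:] ^ (k - 1) * [:b, -1:]) = k"
    and "coeff ([:- a, 1:] ^ (k - 1) * [:b, -1:]) k = -1"
proof -
  have "degree ([:- a, 1:] ^ (k - 1) * [:b, -1:]) = degree ([:- a, 1:] ^ (k - 1)) + degree [:b, -1:]"
    by (rule degree_mult_eq) simp_all
  then show deg: "degree ([:- a, 1:] ^ (k - 1) * [:b, -1:]) = k"
    using assms by (simp add: degree_linear_power)
  have "lead_coeff ([:- a, 1:] ^ (k - 1) * [:b, -1:]) = -1"
    unfolding lead_coeff_mult lead_coeff_power by simp
  then show "coeff ([:- a, 1:] ^ (k - 1) * [:b, -1:]) k = -1"
    by (simp only: deg)
qed

lemma pos_preserver_diffop_coeff_eq_0: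
  fixes K :: "(real^'n::finite) set"
  assumes "K \<noteq> {}" "compact K" and pres: "pos_preserver K (diffop q)"
    and vanish: "\<forall>\<beta>\<in>exps_below \<gamma> - {0, \<gamma>}. q \<beta> = 0" and "\<gamma> \<noteq> 0"
  shows "q \<gamma> = 0"
proof -
  have coord_cont: "continuous_on K (\<lambda>x. x $ j)" for j
    by (intro continuous_intros)
  obtain xmin where xmin: "\<And>j. xmin j \<in> K" "\<And>j y. y \<in> K \<Longrightarrow> xmin j $ j \<le> y $ j"
    using continuous_attains_inf[OF assms(2,1) coord_cont] by metis
  obtain xmax where xmax: "\<And>j. xmax j \<in> K" "\<And>j y. y \<in> K \<Longrightarrow> y $ j \<le> xmax j $ j"
    using continuous_attains_sup[OF assms(2,1) coord_cont] by metis
  obtain i where i: "Poly_Mapping.lookup \<gamma> i \<noteq> 0"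
    using \<open>\<gamma> \<noteq> 0\<close> by (metis lookup_zero poly_mapping_eqI)
  define G where "G j = [:- (xmin j $ j), 1:] ^ Poly_Mapping.lookup \<gamma> j" for j
  define H where "H = [:- (xmin i $ i), 1:] ^ (Poly_Mapping.lookup \<gamma> i - 1) * [:xmax i $ i, -1:]"
  have deg_G: "degree (G j) = Poly_Mapping.lookup \<gamma> j" for j
    by (simp add: G_def degree_linear_power)
  have lead_G: "coeff (G j) (Poly_Mapping.lookup \<gamma> j) = 1" for j
    using lead_coeff_power[of "[:- (xmin j $ j), 1:]"] by (simp add: G_def degree_linear_power)
  have deg_H: "degree H = Poly_Mapping.lookup \<gamma> i" and lead_H: "coeff H (Poly_Mapping.lookup \<gamma> i) = -1"
    using i degree_coeff_linear_power_mult_reflected unfolding H_def by blast+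
  have G_nonneg: "0 \<le> poly (G j) (y $ j)" if "y \<in> K" for j y
    using xmin(2)[OF that] by (simp add: G_def)
  have H_nonneg: "0 \<le> poly H (y $ i)" if "y \<in> K" for y
    using xmin(2)[OF that, of i] xmax(2)[OF that, of i] unfolding H_def poly_mult poly_power
    by (intro mult_nonneg_nonneg zero_le_power) simp_all
  have "0 \<le> q \<gamma> * (\<Prod>j\<in>UNIV. coeff (G j) (Poly_Mapping.lookup \<gamma> j))"
  proof (rule pos_preserver_diffop_coeff_mult_nonneg[OF pres vanish \<open>\<gamma> \<noteq> 0\<close> _ _ xmin(1)])
    show "(\<Prod>j\<in>UNIV. poly (G j) (xmin i $ j)) = 0"
      using i by (intro prod_zero bexI[of _ i]) (simp_all add: G_def)
  qed (simp_all add: deg_G G_nonneg prod_nonneg)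
  then have "0 \<le> q \<gamma>"
    by (simp add: lead_G)
  have "0 \<le> q \<gamma> * (\<Prod>j\<in>UNIV. coeff ((G(i := H)) j) (Poly_Mapping.lookup \<gamma> j))"
  proof (rule pos_preserver_diffop_coeff_mult_nonneg[OF pres vanish \<open>\<gamma> \<noteq> 0\<close> _ _ xmax(1)])
    show "(\<Prod>j\<in>UNIV. poly ((G(i := H)) j) (xmax i $ j)) = 0"
      by (intro prod_zero bexI[of _ i]) (simp_all add: H_def)
  qed (simp_all add: deg_G deg_H G_nonneg H_nonneg prod_nonneg)
  moreover have "(\<Prod>j\<in>UNIV. coeff ((G(i := H)) j) (Poly_Mapping.lookup \<gamma> j)) = -1"
    by (simp add: prod.remove[of UNIV i] lead_G lead_H)
  ultimately have "q \<gamma> \<le> 0"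
    by simp
  with \<open>0 \<le> q \<gamma>\<close> show ?thesis
    by simp
qed

lemma keys_subset_exps_below_sum: "Poly_Mapping.keys p \<subseteq> exps_below (\<Sum>\<beta>\<in>Poly_Mapping.keys p. \<beta>)"
  by (auto simp: exps_below_def mle_def lookup_sum intro: member_le_sum)

lemma diffop_eq_pscale:
  fixes q :: "('n::finite \<Rightarrow>\<^sub>0 nat) \<Rightarrow> real"
  assumes "\<forall>\<alpha>. \<alpha> \<noteq> 0 \<longrightarrow> q \<alpha> = 0"
  shows "diffop q p = pscale (q 0) p"
  unfolding diffop_eq_sum_exps_below[OF keys_subset_exps_below_sum]
  using assms
  by (subst sum.mono_neutral_right[OF finite_exps_below, of "{0}"])
    (auto simp: exps_below_def mle_def pderivm_0)

lemma pos_preserver_pscale_nonneg: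
  assumes "K \<noteq> {}" "pos_preserver K (pscale c)"
  shows "0 \<le> c"
proof -
  have one: "peval 1 x = 1" for x :: "real^'n"
    using peval_single[of 0 1 x] by (simp add: mono_eval_def)
  obtain x where "x \<in> K"
    using assms(1) by blast
  with assms(2) show ?thesis
    unfolding pos_preserver_def by (metis one peval_pscale mult.right_neutral zero_le_one)
qed

theorem corollary4p13:
  fixes K :: "(real^'n::finite) set" and q :: "('n \<Rightarrow>\<^sub>0 nat) \<Rightarrow> real"
  assumes "K \<noteq> {}" and "compact K"
    and "pos_preserver K (diffop q)"
  shows "\<exists>c\<ge>0. \<forall>p. diffop q p = pscale c p"
proof -
  have "q \<gamma> = 0" if "\<gamma> \<noteq> 0" for \<gamma>
    using that
  proof (induction \<gamma> rule: measure_induct_rule[where f = "\<lambda>\<gamma>. \<Sum>j\<in>UNIV. Poly_Mapping.lookup \<gamma> j"])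
    case (less \<gamma>)
    have "\<forall>\<beta>\<in>exps_below \<gamma> - {0, \<gamma>}. q \<beta> = 0"
      using less.IH sum_lookup_strict_mono by (auto simp: exps_below_def)
    then show ?case
      by (rule pos_preserver_diffop_coeff_eq_0[OF assms _ less.prems])
  qed
  then have "diffop q = pscale (q 0)"
    by (intro ext diffop_eq_pscale) auto
  moreover have "0 \<le> q 0"
    using assms(1,3) by (intro pos_preserver_pscale_nonneg) (simp_all add: \<open>diffop q = pscale (q 0)\<close>)
  ultimately show ?thesis
    by auto
qed

end
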